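(* Let $\mathbf{x_0}=(x_1,\dots,x_m)\in \mathbb{R}^m$ and let $m_1,\dots,m_n\in\mathbb{N}$ with $m=\sum_{i=1}^n m_i$. Set $s_0=0$ and $s_k=\sum_{i=1}^k m_i$ for $1\le k\le n$. Let $p,p_1,\dots,p_n\in(1,\infty)$ with conjugate exponents $q,q_1,\dots,q_n$ (i.e. $1/p+1/q=1$, $1/p_k+1/q_k=1$). Let $\mathbf{a}=(a_1,\dots,a_m)\in \mathbb{R}^m\setminus \{\theta\}$ and $W=\{(z_1,\dots,z_m)\in \mathbb{R}^m: \sum_{i=1}^m a_iz_i=0\}$. Then for all $(b_1,\dots,b_m)\in W\setminus \{\theta\}$ and all $\lambda \in \mathbb{R}$, $$\Bigg(\sum_{k=1}^n\Big(\sum_{j=s_{k-1}+1}^{s_k}|x_j-\lambda a_j|^{p_k}\Big)^{p/p_k}\Bigg)^{1/p}\Bigg(\sum_{k=1}^n\Big(\sum_{j=s_{k-1}+1}^{s_k}|b_j|^{q_k}\Big)^{q/q_k}\Bigg)^{1/q}\ge \Big| \sum_{j=1}^m x_jb_j\Big|.$$ Moreover, the inequality is optimal: if $W\neq\{\theta\}$, then the minimum over $\lambda\in\mathbb{R}$ of the first factor equals the maximum over $(b_1,\dots,b_m)\in W\setminus\{\theta\}$ of $\big|\sum_j x_jb_j\big|$ divided by the second factor.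
   Context: $\theta$ denotes the zero vector of $\mathbb{R}^m$. *)

theory Defs
  imports Complex_Main
begin

text \<open>Vectors in R^m are represented as functions nat \<Rightarrow> real, using the indices 1..m.
  The block structure is given by block sizes ms 1, ..., ms n; blk_s ms k = ms 1 + ... + ms k.\<close>

definition blk_s :: "(nat \<Rightarrow> nat) \<Rightarrow> nat \<Rightarrow> nat" where
  "blk_s ms k = (\<Sum>i=1..k. ms i)"

definition mixed_norm ::
  "(nat \<Rightarrow> nat) \<Rightarrow> nat \<Rightarrow> (nat \<Rightarrow> real) \<Rightarrow> real \<Rightarrow> (nat \<Rightarrow> real) \<Rightarrow> real" where
  "mixed_norm ms n rs r v =
     (\<Sum>k=1..n. (\<Sum>j=blk_s ms (k-1)+1..blk_s ms k. \<bar>v j\<bar> powr rs k) powr (r / rs k)) powr (1 / r)"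

end

theory Submission
  imports Defs "HOL-Analysis.Analysis"
begin

text \<open>For b orthogonal to a, the sum of the x_j b_j does not change when x is replaced by
  x - t a, so the inequality is the mixed Hoelder inequality (Hoelder inside each block, then
  across the blocks) applied to x - t a and b. For optimality, t \<mapsto> mixed_norm (x - t a) ^ p
  is differentiable and coercive, hence has a minimiser t0. Its derivative is -p times the
  inner product of a with the dual vector d of x - t0 a, the vector for which the mixed Hoelder
  inequality is an equality; so d is orthogonal to a and attains the bound. If x - t0 a vanishes,
  then d = 0, but then both sides are 0 for every nonzero b orthogonal to a.\<close>

lemma Holder_inequality_sum:
  fixes f g :: "'a \<Rightarrow> real"
  assumes "finite I" and f: "\<And>i. i \<in> I \<Longrightarrow> f i \<ge> 0" and g: "\<And>i. i \<in> I \<Longrightarrow> g i \<ge> 0"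
    and pq: "p > 1" "q > 1" "1/p + 1/q = 1"
  shows "(\<Sum>i\<in>I. f i * g i) \<le> (\<Sum>i\<in>I. f i powr p) powr (1/p) * (\<Sum>i\<in>I. g i powr q) powr (1/q)"
proof -
  define A B where "A = (\<Sum>i\<in>I. f i powr p)" and "B = (\<Sum>i\<in>I. g i powr q)"
  show ?thesis
  proof (cases "A = 0 \<or> B = 0")
    case True
    then have "\<forall>i\<in>I. f i = 0 \<or> g i = 0"
      unfolding A_def B_def using \<open>finite I\<close> f g by (auto simp: sum_nonneg_eq_0_iff)
    then show ?thesis by (simp add: sum.neutral)
  next
    case False
    then have "A > 0" "B > 0" unfolding A_def B_def by (auto intro!: sum_nonneg order.not_eq_order_implies_strict)
    define A' B' where "A' = A powr (1/p)" and "B' = B powr (1/q)"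
    have "A' > 0" "B' > 0" "A' powr p = A" "B' powr q = B"
      using \<open>A > 0\<close> \<open>B > 0\<close> pq by (auto simp: A'_def B'_def powr_powr)
    have Young: "(f i / A') * (g i / B') \<le> f i powr p / (p * A) + g i powr q / (q * B)"
      if "i \<in> I" for i
    proof -
      have "(f i / A') * (g i / B') \<le> (f i / A') powr p / p + (g i / B') powr q / q"
        using f g that \<open>A' > 0\<close> \<open>B' > 0\<close> by (intro Youngs_inequality pq) auto
      also have "\<dots> = f i powr p / (p * A) + g i powr q / (q * B)"
        using f g that \<open>A' > 0\<close> \<open>B' > 0\<close>
        by (simp add: powr_divide \<open>A' powr p = A\<close> \<open>B' powr q = B\<close> mult.commute)
      finally show ?thesis .
    qed
    have "(\<Sum>i\<in>I. f i * g i) / (A' * B') = (\<Sum>i\<in>I. (f i / A') * (g i / B'))"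
      by (simp add: sum_divide_distrib)
    also have "\<dots> \<le> (\<Sum>i\<in>I. f i powr p / (p * A) + g i powr q / (q * B))"
      by (rule sum_mono) (rule Young)
    also have "\<dots> = 1/p + 1/q"
      using \<open>A > 0\<close> \<open>B > 0\<close>
      by (simp add: sum.distrib flip: sum_divide_distrib A_def B_def)
    finally show ?thesis
      using \<open>A' > 0\<close> \<open>B' > 0\<close> pq by (simp add: divide_le_eq A'_def B'_def A_def B_def)
  qed
qed

lemma conjugate_exponent_eq:
  fixes p q :: real
  assumes "p > 1" and "1/p + 1/q = 1"
  shows "q = p / (p - 1)"
proof -
  have "q \<noteq> 0" using assms by auto
  then show ?thesis using assms by (simp add: field_simps)
qed

lemma conjugate_exponent_gt_1:
  fixes p q :: real
  assumes "p > 1" and "1/p + 1/q = 1"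
  shows "q > 1"
  using assms by (simp add: conjugate_exponent_eq[OF assms] less_divide_eq)

lemma conjugate_exponent_mult:
  fixes p q :: real
  assumes "p > 1" and "1/p + 1/q = 1"
  shows "(p - 1) * q = p"
  using assms(1) by (simp add: conjugate_exponent_eq[OF assms])

lemma sum_mult_line_orthogonal:
  fixes x a b :: "'a \<Rightarrow> real"
  assumes "(\<Sum>j\<in>A. a j * b j) = 0"
  shows "(\<Sum>j\<in>A. (x j - t * a j) * b j) = (\<Sum>j\<in>A. x j * b j)"
proof -
  have "(\<Sum>j\<in>A. (x j - t * a j) * b j) = (\<Sum>j\<in>A. x j * b j) - t * (\<Sum>j\<in>A. a j * b j)"
    by (simp add: left_diff_distrib sum_subtractf sum_distrib_left mult.assoc)
  with assms show ?thesis by simp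
qed

lemma has_real_derivative_abs_powr:
  fixes r y :: real
  assumes "r > 1"
  shows "((\<lambda>y. \<bar>y\<bar> powr r) has_real_derivative r * sgn y * \<bar>y\<bar> powr (r - 1)) (at y)"
proof -
  consider "y > 0" | "y < 0" | "y = 0" by linarith
  then show ?thesis
  proof cases
    case 1
    have "eventually (\<lambda>z. z \<in> {0<..}) (nhds y)"
      using 1 by (intro eventually_nhds_in_open) auto
    then have "eventually (\<lambda>z. \<bar>z\<bar> powr r = z powr r) (nhds y)"
      by eventually_elim simp
    then show ?thesis
      using 1 by (subst DERIV_cong_ev[OF refl _ refl]) (auto intro!: derivative_eq_intros)
  next
    case 2
    have "eventually (\<lambda>z. z \<in> {..<0}) (nhds y)"
      using 2 by (intro eventually_nhds_in_open) auto
    then have "eventually (\<lambda>z. \<bar>z\<bar> powr r = (-z) powr r) (nhds y)"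
      by eventually_elim simp
    then show ?thesis
      using 2 by (subst DERIV_cong_ev[OF refl _ refl]) (auto intro!: derivative_eq_intros)
  next
    case 3
    have "\<bar>h\<bar> powr (r - 1) = norm (\<bar>h\<bar> powr r / h)" if "h \<noteq> 0" for h :: real
      using that by (simp add: powr_diff)
    then have "eventually (\<lambda>h. \<bar>h\<bar> powr (r - 1) = norm (\<bar>h\<bar> powr r / h)) (at 0)"
      by (simp add: eventually_at_filter)
    moreover have "((\<lambda>h. \<bar>h\<bar> powr (r - 1)) \<longlongrightarrow> \<bar>0\<bar> powr (r - 1)) (at (0::real))"
      using assms by (intro tendsto_intros) auto
    ultimately have "((\<lambda>h. norm (\<bar>h\<bar> powr r / h)) \<longlongrightarrow> 0) (at (0::real))"
      by (simp add: tendsto_cong)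
    then have "((\<lambda>h. \<bar>h\<bar> powr r / h) \<longlongrightarrow> 0) (at 0)"
      by (rule tendsto_norm_zero_cancel)
    then show ?thesis
      using 3 by (simp add: DERIV_def)
  qed
qed

lemma real_continuous_attains_min_if_coercive:
  fixes f :: "real \<Rightarrow> real"
  assumes "continuous_on UNIV f" and "filterlim f at_top at_infinity"
  obtains t0 where "\<And>t. f t0 \<le> f t"
proof -
  have "eventually (\<lambda>t. f 0 \<le> f t) at_infinity"
    using assms(2) by (simp add: filterlim_at_top)
  then obtain R where R: "\<And>t. R \<le> norm t \<Longrightarrow> f 0 \<le> f t"
    by (auto simp: eventually_at_infinity)
  obtain t0 where "t0 \<in> cball 0 \<bar>R\<bar>" and t0: "\<And>t. t \<in> cball 0 \<bar>R\<bar> \<Longrightarrow> f t0 \<le> f t"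
    using continuous_attains_inf[OF compact_cball _ continuous_on_subset[OF assms(1)], of 0 "\<bar>R\<bar>"]
    by auto
  have "f t0 \<le> f t" for t
  proof (cases "t \<in> cball 0 \<bar>R\<bar>")
    case False
    then have "f 0 \<le> f t" by (intro R) auto
    moreover have "f t0 \<le> f 0" by (intro t0) simp
    ultimately show ?thesis by linarith
  qed (use t0 in auto)
  then show ?thesis by (rule that)
qed

definition block :: "(nat \<Rightarrow> nat) \<Rightarrow> nat \<Rightarrow> nat set" where
  "block ms k = {blk_s ms (k - 1) + 1..blk_s ms k}"

lemma finite_block [simp]: "finite (block ms k)"
  by (simp add: block_def)

lemma blk_s_mono: "k \<le> k' \<Longrightarrow> blk_s ms k \<le> blk_s ms k'"
  unfolding blk_s_def by (rule sum_mono2) auto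

lemma sum_blocks: "(\<Sum>k=1..n. \<Sum>j\<in>block ms k. f j) = (\<Sum>j=1..blk_s ms n. f j)"
proof (induction n)
  case (Suc n)
  have "(\<Sum>j=1..blk_s ms (Suc n). f j) = (\<Sum>j=1..blk_s ms n + ms (Suc n). f j)"
    by (simp add: blk_s_def)
  also have "\<dots> = (\<Sum>j=1..blk_s ms n. f j) + (\<Sum>j=blk_s ms n + 1..blk_s ms n + ms (Suc n). f j)"
    by (rule sum.ub_add_nat) simp
  finally show ?case using Suc by (simp add: block_def blk_s_def)
qed (simp add: blk_s_def)

lemma block_subset: "k \<in> {1..n} \<Longrightarrow> block ms k \<subseteq> {1..blk_s ms n}"
  using blk_s_mono[of k n ms] by (auto simp: block_def)

lemma disjoint_blocks:
  assumes "k \<noteq> k'"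
  shows "block ms k \<inter> block ms k' = {}"
proof -
  have "block ms k \<inter> block ms k' = {}" if "k < k'" for k k'
  proof -
    have "blk_s ms k \<le> blk_s ms (k' - 1)" using that by (intro blk_s_mono) simp
    then show ?thesis by (auto simp: block_def)
  qed
  from this[of k k'] this[of k' k] assms show ?thesis by (cases "k < k'") auto
qed

lemma block_cover:
  assumes "j \<in> {1..blk_s ms n}"
  obtains k where "k \<in> {1..n}" and "j \<in> block ms k"
proof -
  have "\<exists>k\<in>{1..n}. j \<in> block ms k"
    using assms
  proof (induction n)
    case (Suc n)
    show ?case
    proof (cases "j \<le> blk_s ms n")
      case True
      with Suc show ?thesis by force
    next
      case False
      with Suc.prems have "j \<in> block ms (Suc n)" by (auto simp: block_def)
      then show ?thesis by force
    qed
  qed (simp add: blk_s_def)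
  then show ?thesis using that by blast
qed

definition block_powsum ::
  "(nat \<Rightarrow> nat) \<Rightarrow> (nat \<Rightarrow> real) \<Rightarrow> (nat \<Rightarrow> real) \<Rightarrow> nat \<Rightarrow> real" where
  "block_powsum ms rs v k = (\<Sum>j\<in>block ms k. \<bar>v j\<bar> powr rs k)"

definition mixed_norm_pow ::
  "(nat \<Rightarrow> nat) \<Rightarrow> nat \<Rightarrow> (nat \<Rightarrow> real) \<Rightarrow> real \<Rightarrow> (nat \<Rightarrow> real) \<Rightarrow> real" where
  "mixed_norm_pow ms n rs r v = (\<Sum>k=1..n. block_powsum ms rs v k powr (r / rs k))"

lemma block_powsum_nonneg: "block_powsum ms rs v k \<ge> 0"
  by (simp add: block_powsum_def sum_nonneg)

lemma block_powsum_pos: "j \<in> block ms k \<Longrightarrow> v j \<noteq> 0 \<Longrightarrow> block_powsum ms rs v k > 0"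
  unfolding block_powsum_def by (rule sum_pos2) auto

lemma mixed_norm_pow_nonneg: "mixed_norm_pow ms n rs r v \<ge> 0"
  by (simp add: mixed_norm_pow_def sum_nonneg)

lemma mixed_norm_eq_pow: "mixed_norm ms n rs r v = mixed_norm_pow ms n rs r v powr (1 / r)"
  by (simp add: mixed_norm_def mixed_norm_pow_def block_powsum_def block_def)

lemma mixed_norm_pos:
  assumes "j \<in> {1..blk_s ms n}" and "v j \<noteq> 0"
  shows "mixed_norm ms n rs r v > 0"
proof -
  obtain k where k: "k \<in> {1..n}" "j \<in> block ms k"
    using block_cover[OF assms(1)] .
  have "0 < block_powsum ms rs v k powr (r / rs k)"
    using block_powsum_pos[of j ms k v rs] k assms by simp
  also have "\<dots> \<le> mixed_norm_pow ms n rs r v"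
    unfolding mixed_norm_pow_def using k(1) by (intro member_le_sum) auto
  finally show ?thesis by (simp add: mixed_norm_eq_pow)
qed

lemma mixed_norm_eq_0:
  assumes "\<And>j. j \<in> {1..blk_s ms n} \<Longrightarrow> v j = 0"
  shows "mixed_norm ms n rs r v = 0"
proof -
  have "block_powsum ms rs v k = 0" if "k \<in> {1..n}" for k
    using assms block_subset[OF that, of ms] by (auto simp: block_powsum_def intro!: sum.neutral)
  then show ?thesis by (simp add: mixed_norm_eq_pow mixed_norm_pow_def)
qed

text \<open>The sum over k only selects the block containing j. Up to the factor r,
  mixed_dual v is the gradient of mixed_norm_pow at v.\<close>

definition mixed_dual ::
  "(nat \<Rightarrow> nat) \<Rightarrow> nat \<Rightarrow> (nat \<Rightarrow> real) \<Rightarrow> real \<Rightarrow> (nat \<Rightarrow> real) \<Rightarrow> nat \<Rightarrow> real" where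
  "mixed_dual ms n rs r v j =
     (\<Sum>k=1..n. if j \<in> block ms k
        then sgn (v j) * \<bar>v j\<bar> powr (rs k - 1) * block_powsum ms rs v k powr (r / rs k - 1)
        else 0)"

lemma mixed_dual_block:
  assumes "k \<in> {1..n}" and "j \<in> block ms k"
  shows "mixed_dual ms n rs r v j
    = sgn (v j) * \<bar>v j\<bar> powr (rs k - 1) * block_powsum ms rs v k powr (r / rs k - 1)"
proof -
  have "j \<notin> block ms k'" if "k' \<noteq> k" for k'
    using disjoint_blocks[OF that, of ms] assms(2) by blast
  then have "mixed_dual ms n rs r v j = (\<Sum>k'=1..n. if k' = k
        then sgn (v j) * \<bar>v j\<bar> powr (rs k' - 1) * block_powsum ms rs v k' powr (r / rs k' - 1)
        else 0)"
    unfolding mixed_dual_def using assms(2) by (intro sum.cong refl) auto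
  then show ?thesis
    using assms(1) by simp
qed

lemma mixed_dual_nonzero:
  assumes "j \<in> {1..blk_s ms n}" and "v j \<noteq> 0"
  shows "mixed_dual ms n rs r v j \<noteq> 0"
proof -
  obtain k where k: "k \<in> {1..n}" "j \<in> block ms k"
    using block_cover[OF assms(1)] .
  then show ?thesis
    using block_powsum_pos[of j ms k v rs] assms(2) by (simp add: mixed_dual_block sgn_if)
qed

lemma sum_mult_mixed_dual:
  "(\<Sum>j=1..blk_s ms n. v j * mixed_dual ms n rs r v j) = mixed_norm_pow ms n rs r v"
proof -
  have "(\<Sum>j\<in>block ms k. v j * mixed_dual ms n rs r v j) = block_powsum ms rs v k powr (r / rs k)"
    if "k \<in> {1..n}" for k
  proof -
    let ?S = "block_powsum ms rs v k"
    have "v j * mixed_dual ms n rs r v j = ?S powr (r / rs k - 1) * \<bar>v j\<bar> powr rs k"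
      if "j \<in> block ms k" for j
    proof -
      have "v j * mixed_dual ms n rs r v j
          = ?S powr (r / rs k - 1) * ((v j * sgn (v j)) * \<bar>v j\<bar> powr (rs k - 1))"
        using \<open>k \<in> {1..n}\<close> that by (simp add: mixed_dual_block ac_simps)
      also have "\<dots> = ?S powr (r / rs k - 1) * \<bar>v j\<bar> powr rs k"
        by (simp add: powr_mult_base flip: abs_sgn)
      finally show ?thesis .
    qed
    then have "(\<Sum>j\<in>block ms k. v j * mixed_dual ms n rs r v j) = ?S powr (r / rs k - 1) * ?S"
      by (simp add: block_powsum_def sum_distrib_left)
    also have "\<dots> = ?S powr (r / rs k)"
      using powr_mult_base[OF block_powsum_nonneg] by (simp add: mult.commute)
    finally show ?thesis .
  qed
  then show ?thesis
    unfolding mixed_norm_pow_def sum_blocks[symmetric] by simp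
qed

lemma has_real_derivative_powsum_line:
  fixes x a :: "'a \<Rightarrow> real"
  assumes "finite B" and "r > 1" and "s > 1"
  defines "S t \<equiv> \<Sum>j\<in>B. \<bar>x j - t * a j\<bar> powr s"
  shows "((\<lambda>t. S t powr (r / s)) has_real_derivative
    - r * (\<Sum>j\<in>B. a j *
      (sgn (x j - t * a j) * \<bar>x j - t * a j\<bar> powr (s - 1) * S t powr (r / s - 1)))) (at t)"
proof (cases "S t = 0")
  case False
  then have "S t > 0" by (simp add: S_def sum_nonneg order.not_eq_order_implies_strict)
  have "(S has_real_derivative
      (\<Sum>j\<in>B. s * sgn (x j - t * a j) * \<bar>x j - t * a j\<bar> powr (s - 1) * (- a j))) (at t)"
    unfolding S_def[abs_def]
    by (intro DERIV_sum DERIV_chain2[OF has_real_derivative_abs_powr[OF \<open>s > 1\<close>]])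
       (auto intro!: derivative_eq_intros)
  from DERIV_fun_powr[OF this \<open>S t > 0\<close>, of "r / s"] show ?thesis
    using \<open>s > 1\<close> by (simp add: sum_distrib_left sum_negf[symmetric] algebra_simps)
next
  case True
  then have x: "x j = t * a j" if "j \<in> B" for j
    using assms(1) that by (simp add: S_def sum_nonneg_eq_0_iff)
  define C where "C = (\<Sum>j\<in>B. \<bar>a j\<bar> powr s) powr (r / s)"
  have feq: "S t' powr (r / s) = \<bar>t' - t\<bar> powr r * C" for t'
  proof -
    have "S t' = \<bar>t' - t\<bar> powr s * (\<Sum>j\<in>B. \<bar>a j\<bar> powr s)"
      unfolding S_def sum_distrib_left
      by (intro sum.cong refl)
        (simp add: x left_diff_distrib[symmetric] abs_mult powr_mult abs_minus_commute)
    then show ?thesis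
      using \<open>s > 1\<close> by (simp add: C_def powr_mult powr_powr)
  qed
  have shift: "((\<lambda>t'. t' - t) has_real_derivative 1) (at t)"
    by (auto intro!: derivative_eq_intros)
  have "((\<lambda>t'. \<bar>t' - t\<bar> powr r * C) has_real_derivative 0) (at t)"
    using DERIV_cmult_right[OF DERIV_chain2[OF has_real_derivative_abs_powr[OF \<open>r > 1\<close>] shift]]
    by simp
  then show ?thesis
    by (simp add: feq x)
qed

lemma has_real_derivative_mixed_norm_pow_line:
  assumes "\<And>k. k \<in> {1..n} \<Longrightarrow> rs k > 1" and "r > 1"
  shows "((\<lambda>t. mixed_norm_pow ms n rs r (\<lambda>j. x j - t * a j)) has_real_derivative
    - r * (\<Sum>j=1..blk_s ms n. a j * mixed_dual ms n rs r (\<lambda>j. x j - t * a j) j)) (at t)"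
proof -
  have "((\<lambda>t. mixed_norm_pow ms n rs r (\<lambda>j. x j - t * a j)) has_real_derivative
      (\<Sum>k=1..n. - r * (\<Sum>j\<in>block ms k. a j * mixed_dual ms n rs r (\<lambda>j. x j - t * a j) j))) (at t)"
    unfolding mixed_norm_pow_def block_powsum_def
    using assms has_real_derivative_powsum_line[OF finite_block \<open>r > 1\<close>, of "rs _" x a ms _ t]
    by (intro DERIV_sum) (simp add: mixed_dual_block block_powsum_def)
  then show ?thesis
    unfolding sum_blocks[symmetric] by (simp add: sum_distrib_left)
qed

lemma mixed_norm_pow_line_coercive:
  assumes "j0 \<in> {1..blk_s ms n}" and "a j0 \<noteq> 0"
    and "\<And>k. k \<in> {1..n} \<Longrightarrow> rs k > 0" and "r \<ge> 1"
  shows "filterlim (\<lambda>t. mixed_norm_pow ms n rs r (\<lambda>j. x j - t * a j)) at_top at_infinity"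
proof -
  obtain k0 where k0: "k0 \<in> {1..n}" "j0 \<in> block ms k0"
    using block_cover[OF assms(1)] .
  have "filterlim (\<lambda>t. x j0 + (- a j0) * t) at_infinity at_infinity"
    using assms(2)
    by (intro tendsto_add_filterlim_at_infinity[OF tendsto_const]
        tendsto_mult_filterlim_at_infinity[OF tendsto_const] filterlim_ident) simp
  then have lim: "filterlim (\<lambda>t. \<bar>x j0 - t * a j0\<bar>) at_top at_infinity"
    using filterlim_at_infinity_imp_norm_at_top by (fastforce simp: algebra_simps)
  have "\<bar>x j0 - t * a j0\<bar> \<le> mixed_norm_pow ms n rs r (\<lambda>j. x j - t * a j)"
    if "\<bar>x j0 - t * a j0\<bar> \<ge> 1" for t
  proof -
    have "\<bar>x j0 - t * a j0\<bar> \<le> \<bar>x j0 - t * a j0\<bar> powr r"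
      using that \<open>r \<ge> 1\<close> powr_mono[of 1 r "\<bar>x j0 - t * a j0\<bar>"] by simp
    also have "\<dots> = (\<bar>x j0 - t * a j0\<bar> powr rs k0) powr (r / rs k0)"
      using assms(3)[OF k0(1)] by (simp add: powr_powr)
    also have "\<dots> \<le> block_powsum ms rs (\<lambda>j. x j - t * a j) k0 powr (r / rs k0)"
      unfolding block_powsum_def using k0 assms(3)[OF k0(1)] \<open>r \<ge> 1\<close>
      by (intro powr_mono2 member_le_sum) auto
    also have "\<dots> \<le> mixed_norm_pow ms n rs r (\<lambda>j. x j - t * a j)"
      unfolding mixed_norm_pow_def using k0(1) by (intro member_le_sum) auto
    finally show ?thesis .
  qed
  moreover have "eventually (\<lambda>t. \<bar>x j0 - t * a j0\<bar> \<ge> 1) at_infinity"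
    using lim by (simp add: filterlim_at_top)
  ultimately show ?thesis
    by (intro filterlim_at_top_mono[OF lim]) (auto elim: eventually_mono)
qed

lemma mixed_norm_pow_line_attains_min:
  assumes "\<exists>j\<in>{1..blk_s ms n}. a j \<noteq> 0"
    and "\<And>k. k \<in> {1..n} \<Longrightarrow> rs k > 1" and "r > 1"
  obtains t0 where "\<And>t. mixed_norm_pow ms n rs r (\<lambda>j. x j - t0 * a j)
    \<le> mixed_norm_pow ms n rs r (\<lambda>j. x j - t * a j)"
proof (rule real_continuous_attains_min_if_coercive)
  show "continuous_on UNIV (\<lambda>t. mixed_norm_pow ms n rs r (\<lambda>j. x j - t * a j))"
    using has_real_derivative_mixed_norm_pow_line[where n=n and rs=rs, OF assms(2,3)]
    by (intro continuous_at_imp_continuous_on ballI DERIV_isCont) blast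
  from assms(1) obtain j0 where "j0 \<in> {1..blk_s ms n}" "a j0 \<noteq> 0"
    by blast
  with assms(2,3)
  show "filterlim (\<lambda>t. mixed_norm_pow ms n rs r (\<lambda>j. x j - t * a j)) at_top at_infinity"
    by (intro mixed_norm_pow_line_coercive) fastforce+
qed (rule that)

lemma mixed_dual_orthogonal_at_min:
  assumes "\<And>k. k \<in> {1..n} \<Longrightarrow> rs k > 1" and "r > 1"
    and "\<And>t. mixed_norm_pow ms n rs r (\<lambda>j. x j - t0 * a j)
      \<le> mixed_norm_pow ms n rs r (\<lambda>j. x j - t * a j)"
  shows "(\<Sum>j=1..blk_s ms n. a j * mixed_dual ms n rs r (\<lambda>j. x j - t0 * a j) j) = 0"
  using DERIV_local_min[OF has_real_derivative_mixed_norm_pow_line[where n=n and rs=rs, OF assms(1,2)],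
      of 1] assms(2,3)
  by simp

definition punctured_hyperplane ::
  "(nat \<Rightarrow> nat) \<Rightarrow> nat \<Rightarrow> (nat \<Rightarrow> real) \<Rightarrow> (nat \<Rightarrow> real) set" where "punctured_hyperplane ms n a =
    {b. (\<Sum>j=1..blk_s ms n. a j * b j) = 0 \<and> (\<exists>j\<in>{1..blk_s ms n}. b j \<noteq> 0)}"

locale conjugate_mixed_exponents =
  fixes n :: nat and p q :: real and ps qs :: "nat \<Rightarrow> real"
  assumes p_gt_1: "p > 1" and conjugate: "1 / p + 1 / q = 1"
    and ps_gt_1: "\<And>k. k \<in> {1..n} \<Longrightarrow> ps k > 1"
    and conjugates: "\<And>k. k \<in> {1..n} \<Longrightarrow> 1 / ps k + 1 / qs k = 1"
begin

lemma q_gt_1: "q > 1"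
  by (rule conjugate_exponent_gt_1[OF p_gt_1 conjugate])

lemma qs_gt_1: "k \<in> {1..n} \<Longrightarrow> qs k > 1"
  by (rule conjugate_exponent_gt_1[OF ps_gt_1 conjugates])

lemma mixed_Holder_inequality:
  "\<bar>\<Sum>j=1..blk_s ms n. u j * b j\<bar> \<le> mixed_norm ms n ps p u * mixed_norm ms n qs q b"
proof -
  define U where "U k = block_powsum ms ps u k powr (1 / ps k)" for k
  define B where "B k = block_powsum ms qs b k powr (1 / qs k)" for k
  have "\<bar>\<Sum>j=1..blk_s ms n. u j * b j\<bar> \<le> (\<Sum>k=1..n. \<Sum>j\<in>block ms k. \<bar>u j\<bar> * \<bar>b j\<bar>)"
    unfolding sum_blocks using sum_abs[of "\<lambda>j. u j * b j" "{1..blk_s ms n}"] by (simp add: abs_mult)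
  also have "\<dots> \<le> (\<Sum>k=1..n. U k * B k)"
    unfolding U_def B_def block_powsum_def using ps_gt_1 qs_gt_1 conjugates
    by (intro sum_mono Holder_inequality_sum) auto
  also have "\<dots> \<le> (\<Sum>k=1..n. U k powr p) powr (1/p) * (\<Sum>k=1..n. B k powr q) powr (1/q)"
    using p_gt_1 q_gt_1 conjugate by (intro Holder_inequality_sum) (auto simp: U_def B_def)
  also have "\<dots> = mixed_norm ms n ps p u * mixed_norm ms n qs q b"
    by (simp add: mixed_norm_eq_pow mixed_norm_pow_def U_def B_def powr_powr)
  finally show ?thesis .
qed

lemma abs_sum_le_mixed_norm_line:
  assumes "(\<Sum>j=1..blk_s ms n. a j * b j) = 0"
  shows "\<bar>\<Sum>j=1..blk_s ms n. x j * b j\<bar>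
    \<le> mixed_norm ms n ps p (\<lambda>j. x j - t * a j) * mixed_norm ms n qs q b"
  using mixed_Holder_inequality[where ms=ms and u="\<lambda>j. x j - t * a j" and b=b]
  unfolding sum_mult_line_orthogonal[OF assms] .

lemma abs_sum_div_mixed_norm_le_line:
  assumes "b \<in> punctured_hyperplane ms n a"
  shows "\<bar>\<Sum>j=1..blk_s ms n. x j * b j\<bar> / mixed_norm ms n qs q b
    \<le> mixed_norm ms n ps p (\<lambda>j. x j - t * a j)"
proof -
  have "mixed_norm ms n qs q b > 0"
    using assms mixed_norm_pos by (auto simp: punctured_hyperplane_def)
  with abs_sum_le_mixed_norm_line assms show ?thesis
    by (simp add: divide_le_eq punctured_hyperplane_def)
qed

lemma mixed_norm_mixed_dual:
  "mixed_norm ms n qs q (mixed_dual ms n ps p v) = mixed_norm_pow ms n ps p v powr (1 / q)"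
proof -
  have "block_powsum ms qs (mixed_dual ms n ps p v) k powr (q / qs k) = block_powsum ms ps v k powr (p / ps k)"
    if k: "k \<in> {1..n}" for k
  proof -
    let ?S = "block_powsum ms ps v k" and ?e = "(p / ps k - 1) * qs k"
    have "\<bar>mixed_dual ms n ps p v j\<bar> powr qs k = ?S powr ?e * \<bar>v j\<bar> powr ps k"
      if "j \<in> block ms k" for j
    proof -
      have "\<bar>mixed_dual ms n ps p v j\<bar> = \<bar>v j\<bar> powr (ps k - 1) * ?S powr (p / ps k - 1)"
        using k that by (cases "v j = 0") (simp_all add: mixed_dual_block abs_mult)
      then show ?thesis
        using conjugate_exponent_mult[OF ps_gt_1 conjugates, OF k k]
        by (simp add: powr_mult powr_powr mult.commute)
    qed
    then have "block_powsum ms qs (mixed_dual ms n ps p v) k = ?S powr ?e * ?S"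
      by (simp add: block_powsum_def sum_distrib_left)
    also have "\<dots> = ?S powr (?e + 1)"
      using powr_mult_base[OF block_powsum_nonneg] by (simp add: mult.commute add.commute)
    finally have "block_powsum ms qs (mixed_dual ms n ps p v) k powr (q / qs k)
        = ?S powr ((?e + 1) * (q / qs k))"
      by (simp add: powr_powr)
    also have "(?e + 1) * (q / qs k) = p / ps k"
    proof -
      have "ps k - 1 \<noteq> 0" "p - 1 \<noteq> 0" "ps k \<noteq> 0" using ps_gt_1[OF k] p_gt_1 by auto
      moreover have "?e + 1 = (p - 1) / (ps k - 1)" and "q / qs k = p / (p - 1) * ((ps k - 1) / ps k)"
        using calculation
        by (simp_all add: conjugate_exponent_eq[OF ps_gt_1 conjugates, OF k k]
            conjugate_exponent_eq[OF p_gt_1 conjugate] field_simps)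
      ultimately show ?thesis by simp
    qed
    finally show ?thesis .
  qed
  then show ?thesis
    by (simp add: mixed_norm_eq_pow mixed_norm_pow_def)
qed

lemma mixed_norm_eq_mixed_dual_ratio:
  "mixed_norm ms n ps p v = \<bar>\<Sum>j=1..blk_s ms n. v j * mixed_dual ms n ps p v j\<bar>
    / mixed_norm ms n qs q (mixed_dual ms n ps p v)"
proof -
  let ?F = "mixed_norm_pow ms n ps p v"
  have "\<bar>\<Sum>j=1..blk_s ms n. v j * mixed_dual ms n ps p v j\<bar>
      / mixed_norm ms n qs q (mixed_dual ms n ps p v) = ?F powr 1 / ?F powr (1 / q)"
    unfolding sum_mult_mixed_dual mixed_norm_mixed_dual
    using mixed_norm_pow_nonneg[of ms n ps p v] by simp
  also have "\<dots> = ?F powr (1 - 1 / q)"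
    by (rule powr_diff[symmetric])
  also have "1 - 1 / q = 1 / p"
    using conjugate by linarith
  finally show ?thesis by (simp add: mixed_norm_eq_pow)
qed

lemma mixed_norm_line_min_attained:
  assumes "\<exists>j\<in>{1..blk_s ms n}. a j \<noteq> 0" and "b \<in> punctured_hyperplane ms n a"
  obtains t0 b0 where "b0 \<in> punctured_hyperplane ms n a"
    and "\<And>t. mixed_norm ms n ps p (\<lambda>j. x j - t0 * a j) \<le> mixed_norm ms n ps p (\<lambda>j. x j - t * a j)"
    and "mixed_norm ms n ps p (\<lambda>j. x j - t0 * a j)
      = \<bar>\<Sum>j=1..blk_s ms n. x j * b0 j\<bar> / mixed_norm ms n qs q b0"
proof -
  obtain t0 where min: "\<And>t. mixed_norm_pow ms n ps p (\<lambda>j. x j - t0 * a j)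
      \<le> mixed_norm_pow ms n ps p (\<lambda>j. x j - t * a j)"
    using mixed_norm_pow_line_attains_min[where n=n and rs=ps and r=p, OF assms(1) ps_gt_1 p_gt_1]
    by blast
  then have N_min: "mixed_norm ms n ps p (\<lambda>j. x j - t0 * a j)
      \<le> mixed_norm ms n ps p (\<lambda>j. x j - t * a j)" for t
    using p_gt_1 by (simp add: mixed_norm_eq_pow powr_mono2 mixed_norm_pow_nonneg)
  define d where "d = mixed_dual ms n ps p (\<lambda>j. x j - t0 * a j)"
  have d_orth: "(\<Sum>j=1..blk_s ms n. a j * d j) = 0"
    unfolding d_def
    by (rule mixed_dual_orthogonal_at_min[where n=n and rs=ps and r=p, OF ps_gt_1 p_gt_1 min])
  show ?thesis
  proof (cases "\<exists>j\<in>{1..blk_s ms n}. x j - t0 * a j \<noteq> 0")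
    case True
    then obtain j where j: "j \<in> {1..blk_s ms n}" "x j - t0 * a j \<noteq> 0"
      by blast
    then have "d j \<noteq> 0"
      unfolding d_def by (rule mixed_dual_nonzero)
    with d_orth j have "d \<in> punctured_hyperplane ms n a"
      by (auto simp: punctured_hyperplane_def)
    have "mixed_norm ms n ps p (\<lambda>j. x j - t0 * a j)
        = \<bar>\<Sum>j=1..blk_s ms n. (x j - t0 * a j) * d j\<bar> / mixed_norm ms n qs q d"
      unfolding d_def by (rule mixed_norm_eq_mixed_dual_ratio)
    also have "(\<Sum>j=1..blk_s ms n. (x j - t0 * a j) * d j) = (\<Sum>j=1..blk_s ms n. x j * d j)"
      by (rule sum_mult_line_orthogonal[OF d_orth])
    finally show ?thesis
      by (rule that[OF \<open>d \<in> punctured_hyperplane ms n a\<close> N_min])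
  next
    case False
    then have "(\<Sum>j=1..blk_s ms n. x j * b j) = t0 * (\<Sum>j=1..blk_s ms n. a j * b j)"
      by (simp add: sum_distrib_left mult.assoc)
    with assms(2) have "(\<Sum>j=1..blk_s ms n. x j * b j) = 0"
      by (simp add: punctured_hyperplane_def)
    moreover from False have "mixed_norm ms n ps p (\<lambda>j. x j - t0 * a j) = 0"
      by (intro mixed_norm_eq_0) simp
    ultimately show ?thesis
      by (intro that[OF assms(2) N_min]) simp
  qed
qed

lemma mixed_norm_line_duality:
  assumes "\<exists>j\<in>{1..blk_s ms n}. a j \<noteq> 0"
  defines "H \<equiv> punctured_hyperplane ms n a"
  shows "(\<forall>b\<in>H. \<forall>t. mixed_norm ms n ps p (\<lambda>j. x j - t * a j) * mixed_norm ms n qs q b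
            \<ge> \<bar>\<Sum>j=1..blk_s ms n. x j * b j\<bar>)
    \<and> (H \<noteq> {} \<longrightarrow>
        (\<exists>t0 b0. b0 \<in> H
          \<and> (\<forall>t. mixed_norm ms n ps p (\<lambda>j. x j - t0 * a j) \<le> mixed_norm ms n ps p (\<lambda>j. x j - t * a j))
          \<and> (\<forall>b\<in>H. \<bar>\<Sum>j=1..blk_s ms n. x j * b j\<bar> / mixed_norm ms n qs q b
                  \<le> \<bar>\<Sum>j=1..blk_s ms n. x j * b0 j\<bar> / mixed_norm ms n qs q b0)
          \<and> mixed_norm ms n ps p (\<lambda>j. x j - t0 * a j)
              = \<bar>\<Sum>j=1..blk_s ms n. x j * b0 j\<bar> / mixed_norm ms n qs q b0))"
proof (intro conjI impI)
  show "\<forall>b\<in>H. \<forall>t. mixed_norm ms n ps p (\<lambda>j. x j - t * a j) * mixed_norm ms n qs q b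
      \<ge> \<bar>\<Sum>j=1..blk_s ms n. x j * b j\<bar>"
    using abs_sum_le_mixed_norm_line by (simp add: H_def punctured_hyperplane_def)
next
  assume "H \<noteq> {}"
  then obtain b where "b \<in> H"
    by blast
  then obtain t0 b0 where "b0 \<in> H"
    and min: "\<And>t. mixed_norm ms n ps p (\<lambda>j. x j - t0 * a j) \<le> mixed_norm ms n ps p (\<lambda>j. x j - t * a j)"
    and eq: "mixed_norm ms n ps p (\<lambda>j. x j - t0 * a j)
      = \<bar>\<Sum>j=1..blk_s ms n. x j * b0 j\<bar> / mixed_norm ms n qs q b0"
    by (rule mixed_norm_line_min_attained[OF assms(1) _, where x=x, folded H_def]) (rule that)
  have "\<forall>b\<in>H. \<bar>\<Sum>j=1..blk_s ms n. x j * b j\<bar> / mixed_norm ms n qs q b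
      \<le> \<bar>\<Sum>j=1..blk_s ms n. x j * b0 j\<bar> / mixed_norm ms n qs q b0"
    unfolding H_def eq[symmetric] by (blast intro: abs_sum_div_mixed_norm_le_line)
  with \<open>b0 \<in> H\<close> min eq show "\<exists>t0 b0. b0 \<in> H
      \<and> (\<forall>t. mixed_norm ms n ps p (\<lambda>j. x j - t0 * a j) \<le> mixed_norm ms n ps p (\<lambda>j. x j - t * a j))
      \<and> (\<forall>b\<in>H. \<bar>\<Sum>j=1..blk_s ms n. x j * b j\<bar> / mixed_norm ms n qs q b
              \<le> \<bar>\<Sum>j=1..blk_s ms n. x j * b0 j\<bar> / mixed_norm ms n qs q b0)
      \<and> mixed_norm ms n ps p (\<lambda>j. x j - t0 * a j)
          = \<bar>\<Sum>j=1..blk_s ms n. x j * b0 j\<bar> / mixed_norm ms n qs q b0"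
    by blast
qed

end

theorem theorem5p13:
  fixes ms :: "nat \<Rightarrow> nat" and n m :: nat
    and p q :: real and ps qs :: "nat \<Rightarrow> real"
    and x a :: "nat \<Rightarrow> real"
  assumes hm: "m = blk_s ms n"
    and hp: "p > 1" and hq: "1 / p + 1 / q = 1"
    and hps: "\<And>k. k \<in> {1..n} \<Longrightarrow> ps k > 1"
    and hqs: "\<And>k. k \<in> {1..n} \<Longrightarrow> 1 / ps k + 1 / qs k = 1"
    and ha: "\<exists>j\<in>{1..m}. a j \<noteq> 0"
  defines "W0 \<equiv> {z :: nat \<Rightarrow> real. (\<Sum>i=1..m. a i * z i) = 0 \<and> (\<exists>j\<in>{1..m}. z j \<noteq> 0)}"
  shows "(\<forall>b \<in> W0. \<forall>t::real.
            mixed_norm ms n ps p (\<lambda>j. x j - t * a j) * mixed_norm ms n qs q b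
              \<ge> \<bar>\<Sum>j=1..m. x j * b j\<bar>)
       \<and> (W0 \<noteq> {} \<longrightarrow>
            (\<exists>t0 b0. b0 \<in> W0
               \<and> (\<forall>t::real. mixed_norm ms n ps p (\<lambda>j. x j - t0 * a j)
                        \<le> mixed_norm ms n ps p (\<lambda>j. x j - t * a j))
               \<and> (\<forall>b\<in>W0. \<bar>\<Sum>j=1..m. x j * b j\<bar> / mixed_norm ms n qs q b
                        \<le> \<bar>\<Sum>j=1..m. x j * b0 j\<bar> / mixed_norm ms n qs q b0)
               \<and> mixed_norm ms n ps p (\<lambda>j. x j - t0 * a j)
                   = \<bar>\<Sum>j=1..m. x j * b0 j\<bar> / mixed_norm ms n qs q b0))"
proof -
  interpret conjugate_mixed_exponents n p q ps qs
    using hp hq hps hqs by unfold_locales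
  have "W0 = punctured_hyperplane ms n a"
    by (simp add: W0_def hm punctured_hyperplane_def)
  moreover have "\<exists>j\<in>{1..blk_s ms n}. a j \<noteq> 0"
    using ha hm by simp
  ultimately show ?thesis
    using mixed_norm_line_duality[where x=x] unfolding hm by simp
qed

end
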